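(* Let $\psi\in\mathcal A$. Then $S_\psi\in\mathcal C(\rho)$.
   Context: Let $G$ be a locally compact abelian group (written additively) with Haar measure $\nu$, and $(Y,\lambda)$ a measure space. Let $H$ be a reproducing kernel Hilbert space of complex functions on $G\times Y$ whose inner product is that of $L^2(G\times Y,\nu\otimes\lambda)$, with reproducing kernel $(K_{x,y})_{(x,y)\in G\times Y}$. Assume $K_{x,y}(u,v)=K_{0,y}(u-x,v)$ for all $u,x\in G$, $v,y\in Y$. For $a\in G$ let $(\rho(a)f)(x,y)=f(x-a,y)$ and $\mathcal C(\rho)=\{S\in\mathcal B(H): S\rho(a)=\rho(a)S\ \forall a\in G\}$. Let $\mathcal A_0$ be the set of functions $\psi\colon G\times Y\times Y\to\mathbb C$ such that $\psi(\cdot,\cdot,v)\in H$ for every $v\in Y$ and $(u,v)\mapsto\overline{\psi(-u,y,v)}$ belongs to $H$ for every $y\in Y$. For $\psi\in\mathcal A_0$, $f\in H$, define $(S_\psi f)(x,y)=\int_{G\times Y}f(u,v)\psi(x-u,y,v)\,d\nu(u)\,d\lambda(v)$. Let $\mathcal A$ be the set of $\psi\in\mathcal A_0$ such that $S_\psi f\in H$ for all $f\in H$ and $S_\psi$ is bounded on $H$. *)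

theory Defs
  imports "HOL-Analysis.Analysis"
begin

definition haar_measure :: "'g::{topological_ab_group_add, t2_space} measure \<Rightarrow> bool" where
  "haar_measure \<nu> \<longleftrightarrow>
     sets \<nu> = sets borel \<and>
     (\<forall>K. compact K \<longrightarrow> emeasure \<nu> K < \<infinity>) \<and>
     (\<forall>A\<in>sets borel. emeasure \<nu> A = (INF U\<in>{U. open U \<and> A \<subseteq> U}. emeasure \<nu> U)) \<and>
     (\<forall>U. open U \<longrightarrow> emeasure \<nu> U = (SUP K\<in>{K. compact K \<and> K \<subseteq> U}. emeasure \<nu> K)) \<and>
     (\<forall>a. \<forall>A\<in>sets borel. emeasure \<nu> ((\<lambda>x. a + x) ` A) = emeasure \<nu> A) \<and>
     emeasure \<nu> UNIV > 0"

definition l2_inner :: "'a measure \<Rightarrow> ('a \<Rightarrow> complex) \<Rightarrow> ('a \<Rightarrow> complex) \<Rightarrow> complex" where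
  "l2_inner M f g = (LINT p|M. f p * cnj (g p))"

definition l2_norm :: "'a measure \<Rightarrow> ('a \<Rightarrow> complex) \<Rightarrow> real" where
  "l2_norm M f = sqrt (LINT p|M. (cmod (f p))\<^sup>2)"

definition square_integrable :: "'a measure \<Rightarrow> ('a \<Rightarrow> complex) \<Rightarrow> bool" where
  "square_integrable M f \<longleftrightarrow> f \<in> borel_measurable M \<and> integrable M (\<lambda>p. (cmod (f p))\<^sup>2)"

definition rkhs_L2 :: "('a \<times> 'b) measure \<Rightarrow> (('a \<times> 'b) \<Rightarrow> complex) set
      \<Rightarrow> ('a \<Rightarrow> 'b \<Rightarrow> ('a \<times> 'b \<Rightarrow> complex)) \<Rightarrow> bool" where
  "rkhs_L2 M H K \<longleftrightarrow>
     (\<forall>f\<in>H. square_integrable M f) \<and>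
     (\<lambda>_. 0) \<in> H \<and>
     (\<forall>f\<in>H. \<forall>g\<in>H. (\<lambda>p. f p + g p) \<in> H) \<and>
     (\<forall>c. \<forall>f\<in>H. (\<lambda>p. c * f p) \<in> H) \<and>
     (\<forall>s. (\<forall>n. s n \<in> H) \<longrightarrow>
          (\<forall>e>0. \<exists>N. \<forall>m\<ge>N. \<forall>n\<ge>N. l2_norm M (\<lambda>p. s m p - s n p) < e) \<longrightarrow>
          (\<exists>f\<in>H. (\<lambda>n. l2_norm M (\<lambda>p. s n p - f p)) \<longlonglongrightarrow> 0)) \<and>
     (\<forall>x y. K x y \<in> H) \<and>
     (\<forall>f\<in>H. \<forall>x y. f (x, y) = l2_inner M f (K x y))"

definition rho :: "'g::ab_group_add \<Rightarrow> ('g \<times> 'y \<Rightarrow> complex) \<Rightarrow> ('g \<times> 'y \<Rightarrow> complex)" where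
  "rho a f = (\<lambda>(x, y). f (x - a, y))"

definition bounded_ops :: "('a \<Rightarrow> complex) set \<Rightarrow> 'a measure
      \<Rightarrow> (('a \<Rightarrow> complex) \<Rightarrow> ('a \<Rightarrow> complex)) set" where
  "bounded_ops H M = {S. (\<forall>f\<in>H. S f \<in> H) \<and>
       (\<forall>f\<in>H. \<forall>g\<in>H. S (\<lambda>p. f p + g p) = (\<lambda>p. S f p + S g p)) \<and>
       (\<forall>c. \<forall>f\<in>H. S (\<lambda>p. c * f p) = (\<lambda>p. c * S f p)) \<and>
       (\<exists>C. \<forall>f\<in>H. l2_norm M (S f) \<le> C * l2_norm M f)}"

definition commutant_rho :: "('g::ab_group_add \<times> 'y \<Rightarrow> complex) set \<Rightarrow> ('g \<times> 'y) measure
      \<Rightarrow> (('g \<times> 'y \<Rightarrow> complex) \<Rightarrow> ('g \<times> 'y \<Rightarrow> complex)) set" where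
  "commutant_rho H M = {S \<in> bounded_ops H M. \<forall>a. \<forall>f\<in>H. S (rho a f) = rho a (S f)}"

definition A0 :: "('g::ab_group_add \<times> 'y \<Rightarrow> complex) set \<Rightarrow> ('g \<Rightarrow> 'y \<Rightarrow> 'y \<Rightarrow> complex) set" where
  "A0 H = {\<psi>. (\<forall>v. (\<lambda>(u, y). \<psi> u y v) \<in> H) \<and> (\<forall>y. (\<lambda>(u, v). cnj (\<psi> (- u) y v)) \<in> H)}"

definition S_op :: "('g::ab_group_add \<times> 'y) measure \<Rightarrow> ('g \<Rightarrow> 'y \<Rightarrow> 'y \<Rightarrow> complex)
      \<Rightarrow> ('g \<times> 'y \<Rightarrow> complex) \<Rightarrow> ('g \<times> 'y \<Rightarrow> complex)" where
  "S_op M \<psi> f = (\<lambda>(x, y). LINT p|M. f p * \<psi> (x - fst p) y (snd p))"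

definition A_set :: "('g::ab_group_add \<times> 'y \<Rightarrow> complex) set \<Rightarrow> ('g \<times> 'y) measure
      \<Rightarrow> ('g \<Rightarrow> 'y \<Rightarrow> 'y \<Rightarrow> complex) set" where
  "A_set H M = {\<psi> \<in> A0 H. (\<forall>f\<in>H. S_op M \<psi> f \<in> H) \<and>
       (\<exists>C. \<forall>f\<in>H. l2_norm M (S_op M \<psi> f) \<le> C * l2_norm M f)}"

end

theory Submission
  imports Defs
begin

text \<open>Each integrand \<open>f(u,v) \<psi>(x - u, y, v)\<close> is a product of two square integrable functions:
  \<open>\<psi>(x - \<cdot>, y, \<cdot>)\<close> is the conjugate of a translate of \<open>(u,v) \<mapsto> cnj (\<psi>(-u, y, v)) \<in> H\<close>.
  Hence \<open>S\<^sub>\<psi>\<close> is linear, and boundedness is part of \<open>\<psi> \<in> \<A>\<close>. The substitution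
  \<open>u \<mapsto> u + a\<close> turns \<open>S\<^sub>\<psi> (\<rho>(a) f)\<close> into \<open>\<rho>(a) (S\<^sub>\<psi> f)\<close>; it preserves \<open>\<nu> \<otimes> \<lambda>\<close> because
  Haar measure is translation invariant. Since \<open>\<lambda>\<close> need not be \<open>\<sigma>\<close>-finite, this invariance is
  checked directly on the iterated integral that defines the product measure.\<close>

lemma nn_integral_comp_left_inverse_le:
  assumes \<sigma>: "\<sigma> \<in> measurable M M" "distr M M \<sigma> = M"
    and inverse: "\<And>x. \<tau> (\<sigma> x) = x"
  shows "(\<integral>\<^sup>+x. F (\<tau> x) \<partial>M) \<le> (\<integral>\<^sup>+x. F x \<partial>M)"
  \<comment> \<open>\<open>F\<close> need not be measurable (the inner integrals of a non-\<open>\<sigma>\<close>-finite product need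
    not be), so the argument goes through the simple functions below \<open>F \<circ> \<tau>\<close>.\<close>
  unfolding nn_integral_def[of M "\<lambda>x. F (\<tau> x)"]
proof (rule SUP_least, clarify)
  fix g assume g: "simple_function M g" "g \<le> (\<lambda>x. F (\<tau> x))"
  have "integral\<^sup>S M g = (\<integral>\<^sup>+x. g x \<partial>distr M M \<sigma>)"
    using g(1) \<sigma>(2) by (simp add: nn_integral_eq_simple_integral)
  also have "\<dots> = (\<integral>\<^sup>+x. g (\<sigma> x) \<partial>M)"
    using \<sigma>(1) by (rule nn_integral_distr) (simp add: \<sigma>(2) borel_measurable_simple_function g(1))
  also have "\<dots> \<le> (\<integral>\<^sup>+x. F x \<partial>M)"
    using g(2) inverse by (intro nn_integral_mono) (metis le_funD)
  finally show "integral\<^sup>S M g \<le> (\<integral>\<^sup>+x. F x \<partial>M)" .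
qed

lemma nn_integral_comp_measure_preserving_bij:
  assumes "\<sigma> \<in> measurable M M" "distr M M \<sigma> = M"
    and "\<tau> \<in> measurable M M" "distr M M \<tau> = M"
    and "\<And>x. \<tau> (\<sigma> x) = x" "\<And>x. \<sigma> (\<tau> x) = x"
  shows "(\<integral>\<^sup>+x. F (\<tau> x) \<partial>M) = (\<integral>\<^sup>+x. F x \<partial>M)"
proof (rule antisym)
  show "(\<integral>\<^sup>+x. F (\<tau> x) \<partial>M) \<le> (\<integral>\<^sup>+x. F x \<partial>M)"
    using assms(1,2,5) by (rule nn_integral_comp_left_inverse_le)
  have "(\<integral>\<^sup>+x. F x \<partial>M) = (\<integral>\<^sup>+x. F (\<tau> (\<sigma> x)) \<partial>M)"
    using assms(5) by simp
  also have "\<dots> \<le> (\<integral>\<^sup>+x. F (\<tau> x) \<partial>M)"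
    using assms(3,4,6) by (rule nn_integral_comp_left_inverse_le)
  finally show "(\<integral>\<^sup>+x. F x \<partial>M) \<le> (\<integral>\<^sup>+x. F (\<tau> x) \<partial>M)" .
qed

lemma distr_pair_measure_eqI:
  assumes T: "T \<in> measurable (M \<Otimes>\<^sub>M N) (M \<Otimes>\<^sub>M N)"
    and preserves: "\<And>X. X \<in> sets (M \<Otimes>\<^sub>M N) \<Longrightarrow>
      (\<integral>\<^sup>+x. \<integral>\<^sup>+y. indicator (T -` X \<inter> space (M \<Otimes>\<^sub>M N)) (x, y) \<partial>N \<partial>M)
        = (\<integral>\<^sup>+x. \<integral>\<^sup>+y. indicator X (x, y) \<partial>N \<partial>M)"
  shows "distr (M \<Otimes>\<^sub>M N) (M \<Otimes>\<^sub>M N) T = M \<Otimes>\<^sub>M N"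
proof (rule measure_eqI)
  define \<Omega> where "\<Omega> = space M \<times> space N"
  define G where "G = {A \<times> B | A B. A \<in> sets M \<and> B \<in> sets N}"
  define \<mu> where "\<mu> X = (\<integral>\<^sup>+x. \<integral>\<^sup>+y. indicator X (x, y) \<partial>N \<partial>M)" for X
  have sets_eq: "sets (M \<Otimes>\<^sub>M N) = sigma_sets \<Omega> G"
    unfolding \<Omega>_def G_def by (rule sets_pair_measure)
  have emeasure_eq: "emeasure (M \<Otimes>\<^sub>M N) X
      = (if measure_space \<Omega> (sigma_sets \<Omega> G) \<mu> then \<mu> X else 0)"
    if "X \<in> sets (M \<Otimes>\<^sub>M N)" for X
    using that sets_eq unfolding pair_measure_def \<Omega>_def G_def \<mu>_def
    by (simp add: emeasure_measure_of_conv)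
  fix X assume "X \<in> sets (distr (M \<Otimes>\<^sub>M N) (M \<Otimes>\<^sub>M N) T)"
  then have X: "X \<in> sets (M \<Otimes>\<^sub>M N)" by simp
  have "emeasure (distr (M \<Otimes>\<^sub>M N) (M \<Otimes>\<^sub>M N) T) X
      = emeasure (M \<Otimes>\<^sub>M N) (T -` X \<inter> space (M \<Otimes>\<^sub>M N))"
    using T X by (rule emeasure_distr)
  also have "\<dots> = emeasure (M \<Otimes>\<^sub>M N) X"
    using emeasure_eq[OF X] emeasure_eq[OF measurable_sets[OF T X]] preserves[OF X]
    by (simp add: \<mu>_def)
  finally show "emeasure (distr (M \<Otimes>\<^sub>M N) (M \<Otimes>\<^sub>M N) T) X = emeasure (M \<Otimes>\<^sub>M N) X" .
qed simp

lemma haar_measure_sets: "haar_measure \<nu> \<Longrightarrow> sets \<nu> = sets borel"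
  by (simp add: haar_measure_def)

lemma haar_measure_space: "haar_measure \<nu> \<Longrightarrow> space \<nu> = UNIV"
  by (metis haar_measure_sets sets_eq_imp_space_eq space_borel)

lemma measurable_haar_translation:
  assumes "haar_measure \<nu>"
  shows "(\<lambda>x. a + x) \<in> measurable \<nu> \<nu>"
proof -
  have "(\<lambda>x. a + x) \<in> borel_measurable borel"
    by (intro borel_measurable_continuous_onI continuous_intros)
  then show ?thesis
    using measurable_cong_sets[OF haar_measure_sets[OF assms] haar_measure_sets[OF assms]] by blast
qed

lemma emeasure_haar_translation:
  "haar_measure \<nu> \<Longrightarrow> A \<in> sets borel \<Longrightarrow> emeasure \<nu> ((\<lambda>x. a + x) ` A) = emeasure \<nu> A"
  unfolding haar_measure_def by blast

lemma distr_haar_translation: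
  assumes haar: "haar_measure \<nu>"
  shows "distr \<nu> \<nu> (\<lambda>x. a + x) = \<nu>"
proof (rule measure_eqI)
  fix A assume "A \<in> sets (distr \<nu> \<nu> (\<lambda>x. a + x))"
  then have A: "A \<in> sets \<nu>" by simp
  have "emeasure (distr \<nu> \<nu> (\<lambda>x. a + x)) A = emeasure \<nu> ((\<lambda>x. a + x) -` A \<inter> space \<nu>)"
    using measurable_haar_translation[OF haar] A by (rule emeasure_distr)
  also have "(\<lambda>x. a + x) -` A \<inter> space \<nu> = (\<lambda>x. - a + x) ` A"
    using haar_measure_space[OF haar] by (auto simp: image_iff algebra_simps)
  also have "emeasure \<nu> ((\<lambda>x. - a + x) ` A) = emeasure \<nu> A"
    using haar A by (simp only: emeasure_haar_translation haar_measure_sets)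
  finally show "emeasure (distr \<nu> \<nu> (\<lambda>x. a + x)) A = emeasure \<nu> A" .
qed simp

lemma nn_integral_haar_translation:
  assumes "haar_measure \<nu>"
  shows "(\<integral>\<^sup>+x. F (a + x) \<partial>\<nu>) = (\<integral>\<^sup>+x. F x \<partial>\<nu>)"
proof (rule nn_integral_comp_measure_preserving_bij)
  show "(\<lambda>x. - a + x) \<in> measurable \<nu> \<nu>" "(\<lambda>x. a + x) \<in> measurable \<nu> \<nu>"
    using assms by (rule measurable_haar_translation)+
  show "distr \<nu> \<nu> (\<lambda>x. - a + x) = \<nu>" "distr \<nu> \<nu> (\<lambda>x. a + x) = \<nu>"
    using assms by (rule distr_haar_translation)+
qed (simp_all only: add.assoc[symmetric] add.left_inverse add.right_inverse add_0)

lemma measurable_pair_haar_translation: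
  assumes "haar_measure \<nu>"
  shows "(\<lambda>p. (a + fst p, snd p)) \<in> measurable (\<nu> \<Otimes>\<^sub>M N) (\<nu> \<Otimes>\<^sub>M N)"
  using measurable_compose[OF measurable_fst measurable_haar_translation[OF assms]]
  by (intro measurable_Pair) simp_all

lemma distr_pair_haar_translation:
  assumes haar: "haar_measure \<nu>"
  shows "distr (\<nu> \<Otimes>\<^sub>M N) (\<nu> \<Otimes>\<^sub>M N) (\<lambda>p. (a + fst p, snd p)) = \<nu> \<Otimes>\<^sub>M N"
proof (rule distr_pair_measure_eqI[OF measurable_pair_haar_translation[OF haar]])
  fix X
  have "(\<integral>\<^sup>+x. \<integral>\<^sup>+y. indicator ((\<lambda>p. (a + fst p, snd p)) -` X \<inter> space (\<nu> \<Otimes>\<^sub>M N)) (x, y) \<partial>N \<partial>\<nu>)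
      = (\<integral>\<^sup>+x. \<integral>\<^sup>+y. indicator X (a + x, y) \<partial>N \<partial>\<nu>)"
    by (intro nn_integral_cong) (simp add: space_pair_measure haar_measure_space[OF haar] indicator_def)
  also have "\<dots> = (\<integral>\<^sup>+x. \<integral>\<^sup>+y. indicator X (x, y) \<partial>N \<partial>\<nu>)"
    using haar by (rule nn_integral_haar_translation)
  finally show "(\<integral>\<^sup>+x. \<integral>\<^sup>+y. indicator ((\<lambda>p. (a + fst p, snd p)) -` X \<inter> space (\<nu> \<Otimes>\<^sub>M N)) (x, y) \<partial>N \<partial>\<nu>)
      = (\<integral>\<^sup>+x. \<integral>\<^sup>+y. indicator X (x, y) \<partial>N \<partial>\<nu>)" .
qed

lemma integral_pair_haar_translation:
  fixes g :: "_ \<Rightarrow> 'b::{banach, second_countable_topology}"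
  assumes haar: "haar_measure \<nu>" and g: "g \<in> borel_measurable (\<nu> \<Otimes>\<^sub>M N)"
  shows "(LINT p|(\<nu> \<Otimes>\<^sub>M N). g (a + fst p, snd p)) = integral\<^sup>L (\<nu> \<Otimes>\<^sub>M N) g"
  using integral_distr[OF measurable_pair_haar_translation[OF haar] g]
  by (simp add: distr_pair_haar_translation[OF haar])

lemma integrable_pair_haar_translation:
  fixes g :: "_ \<Rightarrow> 'b::{banach, second_countable_topology}"
  assumes haar: "haar_measure \<nu>" and g: "integrable (\<nu> \<Otimes>\<^sub>M N) g"
  shows "integrable (\<nu> \<Otimes>\<^sub>M N) (\<lambda>p. g (a + fst p, snd p))"
  using integrable_distr_eq[OF measurable_pair_haar_translation[OF haar] borel_measurable_integrable[OF g]] g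
  by (simp add: distr_pair_haar_translation[OF haar])

lemma square_integrable_pair_haar_translation:
  assumes haar: "haar_measure \<nu>" and h: "square_integrable (\<nu> \<Otimes>\<^sub>M N) h"
  shows "square_integrable (\<nu> \<Otimes>\<^sub>M N) (\<lambda>p. h (a + fst p, snd p))"
proof -
  have "h \<in> borel_measurable (\<nu> \<Otimes>\<^sub>M N)" and "integrable (\<nu> \<Otimes>\<^sub>M N) (\<lambda>p. (cmod (h p))\<^sup>2)"
    using h by (simp_all add: square_integrable_def)
  from measurable_compose[OF measurable_pair_haar_translation[OF haar] this(1)]
    integrable_pair_haar_translation[OF haar this(2)]
  show ?thesis
    by (simp add: square_integrable_def)
qed

lemma square_integrable_cnj:
  assumes "square_integrable M h"
  shows "square_integrable M (\<lambda>p. cnj (h p))"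
proof -
  have "cnj \<in> borel_measurable borel"
    by (intro borel_measurable_continuous_onI continuous_intros)
  then show ?thesis
    using assms measurable_compose[of h M borel cnj] by (simp add: square_integrable_def)
qed

lemma integrable_mult_square_integrable:
  assumes f: "square_integrable M f" and g: "square_integrable M g"
  shows "integrable M (\<lambda>p. f p * g p)"
proof (rule Bochner_Integration.integrable_bound)
  show "integrable M (\<lambda>p. (cmod (f p))\<^sup>2 + (cmod (g p))\<^sup>2)"
    using f g by (simp add: square_integrable_def)
  show "(\<lambda>p. f p * g p) \<in> borel_measurable M"
    using f g by (auto simp: square_integrable_def)
  show "AE p in M. norm (f p * g p) \<le> norm ((cmod (f p))\<^sup>2 + (cmod (g p))\<^sup>2)"
  proof (rule AE_I2)
    fix p
    have "cmod (f p) * cmod (g p) \<le> 2 * cmod (f p) * cmod (g p)"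
      by simp
    also have "\<dots> \<le> (cmod (f p))\<^sup>2 + (cmod (g p))\<^sup>2"
      by (rule sum_squares_bound)
    finally show "norm (f p * g p) \<le> norm ((cmod (f p))\<^sup>2 + (cmod (g p))\<^sup>2)"
      by (simp add: norm_mult)
  qed
qed

lemma square_integrable_A0_kernel:
  assumes haar: "haar_measure \<nu>" and H: "rkhs_L2 (\<nu> \<Otimes>\<^sub>M N) H K" and \<psi>: "\<psi> \<in> A0 H"
  shows "square_integrable (\<nu> \<Otimes>\<^sub>M N) (\<lambda>p. \<psi> (x - fst p) y (snd p))"
proof -
  have "square_integrable (\<nu> \<Otimes>\<^sub>M N) (\<lambda>(u, v). cnj (\<psi> (- u) y v))"
    using H \<psi> by (simp add: rkhs_L2_def A0_def)
  then have "square_integrable (\<nu> \<Otimes>\<^sub>M N)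
      (\<lambda>p. cnj ((\<lambda>(u, v). cnj (\<psi> (- u) y v)) (- x + fst p, snd p)))"
    using haar by (intro square_integrable_cnj square_integrable_pair_haar_translation)
  then show ?thesis
    by (simp add: split_beta)
qed

lemma S_op_add:
  assumes "\<And>x y. integrable M (\<lambda>p. f p * \<psi> (x - fst p) y (snd p))"
    and "\<And>x y. integrable M (\<lambda>p. g p * \<psi> (x - fst p) y (snd p))"
  shows "S_op M \<psi> (\<lambda>p. f p + g p) = (\<lambda>p. S_op M \<psi> f p + S_op M \<psi> g p)"
  using assms by (auto simp: S_op_def fun_eq_iff distrib_right)

lemma S_op_mult: "S_op M \<psi> (\<lambda>p. c * f p) = (\<lambda>p. c * S_op M \<psi> f p)"
  by (auto simp: S_op_def fun_eq_iff mult.assoc)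

lemma S_op_rho:
  assumes haar: "haar_measure \<nu>" and f: "f \<in> borel_measurable (\<nu> \<Otimes>\<^sub>M N)"
    and \<psi>: "\<And>x y. (\<lambda>p. \<psi> (x - fst p) y (snd p)) \<in> borel_measurable (\<nu> \<Otimes>\<^sub>M N)"
  shows "S_op (\<nu> \<Otimes>\<^sub>M N) \<psi> (rho a f) = rho a (S_op (\<nu> \<Otimes>\<^sub>M N) \<psi> f)"
proof (rule ext, clarify)
  fix x y
  define G where "G q = f (fst q - a, snd q) * \<psi> (x - fst q) y (snd q)" for q
  have "(\<lambda>q. f (fst q - a, snd q)) \<in> borel_measurable (\<nu> \<Otimes>\<^sub>M N)"
    using measurable_compose[OF measurable_pair_haar_translation[OF haar, of "- a"] f] by simp
  then have G: "G \<in> borel_measurable (\<nu> \<Otimes>\<^sub>M N)"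
    unfolding G_def using \<psi> by measurable
  have "rho a (S_op (\<nu> \<Otimes>\<^sub>M N) \<psi> f) (x, y) = (LINT q|(\<nu> \<Otimes>\<^sub>M N). G (a + fst q, snd q))"
    by (simp add: rho_def S_op_def G_def algebra_simps)
  also have "\<dots> = integral\<^sup>L (\<nu> \<Otimes>\<^sub>M N) G"
    using haar G by (rule integral_pair_haar_translation)
  also have "\<dots> = S_op (\<nu> \<Otimes>\<^sub>M N) \<psi> (rho a f) (x, y)"
    unfolding G_def rho_def S_op_def by (simp add: split_beta)
  finally show "S_op (\<nu> \<Otimes>\<^sub>M N) \<psi> (rho a f) (x, y) = rho a (S_op (\<nu> \<Otimes>\<^sub>M N) \<psi> f) (x, y)" ..
qed

theorem lemma5p10:
  fixes \<nu> :: "'g::{topological_ab_group_add, t2_space} measure"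
    and lam :: "'y measure"
    and H :: "('g \<times> 'y \<Rightarrow> complex) set"
    and K :: "'g \<Rightarrow> 'y \<Rightarrow> ('g \<times> 'y \<Rightarrow> complex)"
    and \<psi> :: "'g \<Rightarrow> 'y \<Rightarrow> 'y \<Rightarrow> complex"
  assumes "locally_compact_space (euclidean :: 'g topology)"
    and "haar_measure \<nu>"
    and "space lam = UNIV"
    and "rkhs_L2 (\<nu> \<Otimes>\<^sub>M lam) H K"
    and "\<And>x y u v. K x y (u, v) = K 0 y (u - x, v)"
    and "\<psi> \<in> A_set H (\<nu> \<Otimes>\<^sub>M lam)"
  shows "S_op (\<nu> \<Otimes>\<^sub>M lam) \<psi> \<in> commutant_rho H (\<nu> \<Otimes>\<^sub>M lam)"
proof -
  note haar = assms(2) and H = assms(4)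
  let ?S = "S_op (\<nu> \<Otimes>\<^sub>M lam) \<psi>"
  have \<psi>: "\<psi> \<in> A0 H" and closed: "\<forall>f\<in>H. ?S f \<in> H"
    and bounded: "\<exists>C. \<forall>f\<in>H. l2_norm (\<nu> \<Otimes>\<^sub>M lam) (?S f) \<le> C * l2_norm (\<nu> \<Otimes>\<^sub>M lam) f"
    using assms(6) unfolding A_set_def by blast+
  have H_sq: "square_integrable (\<nu> \<Otimes>\<^sub>M lam) f" if "f \<in> H" for f
    using H that by (simp add: rkhs_L2_def)
  have kernel_sq: "square_integrable (\<nu> \<Otimes>\<^sub>M lam) (\<lambda>p. \<psi> (x - fst p) y (snd p))" for x y
    using haar H \<psi> by (rule square_integrable_A0_kernel)
  have add: "?S (\<lambda>p. f p + g p) = (\<lambda>p. ?S f p + ?S g p)" if "f \<in> H" "g \<in> H" for f g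
    using that by (intro S_op_add integrable_mult_square_integrable H_sq kernel_sq)
  have commutes: "?S (rho a f) = rho a (?S f)" if "f \<in> H" for a f
    using haar H_sq[OF that] kernel_sq by (intro S_op_rho) (simp_all add: square_integrable_def)
  show ?thesis
    unfolding commutant_rho_def bounded_ops_def
    using closed bounded add S_op_mult commutes by blast
qed

end
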